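(* (Provable in $\mathrm{ACA}_0$.) Let $X$ be a well-quasi-ordered set. Then the relation $<_2$ on $([X]^{<\omega})^{<\omega}$ is well-founded: there is no infinite sequence $s(0)>_2 s(1)>_2 s(2)>_2\cdots$ of elements of $([X]^{<\omega})^{<\omega}$.
   Context: A well-quasi-order is a quasi-order in which every infinite sequence $x_0,x_1,\dots$ has $i<j$ with $x_i\le x_j$. $[X]^{<\omega}$ is the set of finite subsets of $X$ and $([X]^{<\omega})^{<\omega}$ the set of finite sequences of such. On $[X]^{<\omega}$: $\{y_1,\dots,y_n\}\le_1\{z_1,\dots,z_m\}$ iff for every $j\le m$ there is $i\le n$ with $y_i\le z_j$; $<_1$ is its strict part. On $([X]^{<\omega})^{<\omega}$: $\langle\rho_1,\dots,\rho_n\rangle<_2\langle\sigma_1,\dots,\sigma_m\rangle$ iff there is $f:\{1,\dots,n\}\to\{1,\dots,m\}$ such that $\rho_i\le_1\sigma_{f(i)}$ for all $i\le n$, $\rho_i<_1\sigma_{f(i)}$ for some $i\le n$, and $\rho_i<_1\sigma_{f(i)}$ whenever $i\ne j$ and $f(i)=f(j)$. *)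

theory Defs
  imports Main
begin

definition qo_on :: "'a set \<Rightarrow> ('a \<Rightarrow> 'a \<Rightarrow> bool) \<Rightarrow> bool" where
  "qo_on X le \<longleftrightarrow> (\<forall>x\<in>X. le x x) \<and>
     (\<forall>x\<in>X. \<forall>y\<in>X. \<forall>z\<in>X. le x y \<longrightarrow> le y z \<longrightarrow> le x z)"

definition wqo_on :: "'a set \<Rightarrow> ('a \<Rightarrow> 'a \<Rightarrow> bool) \<Rightarrow> bool" where
  "wqo_on X le \<longleftrightarrow> qo_on X le \<and>
     (\<forall>f::nat \<Rightarrow> 'a. (\<forall>n. f n \<in> X) \<longrightarrow> (\<exists>i j. i < j \<and> le (f i) (f j)))"

definition fin_subsets :: "'a set \<Rightarrow> 'a set set" where
  "fin_subsets X = {A. finite A \<and> A \<subseteq> X}"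

definition fin_seqs :: "'a set \<Rightarrow> 'a set list set" where
  "fin_seqs X = {s. set s \<subseteq> fin_subsets X}"

definition le1 :: "('a \<Rightarrow> 'a \<Rightarrow> bool) \<Rightarrow> 'a set \<Rightarrow> 'a set \<Rightarrow> bool" where
  "le1 le A B \<longleftrightarrow> (\<forall>z\<in>B. \<exists>y\<in>A. le y z)"

definition less1 :: "('a \<Rightarrow> 'a \<Rightarrow> bool) \<Rightarrow> 'a set \<Rightarrow> 'a set \<Rightarrow> bool" where
  "less1 le A B \<longleftrightarrow> le1 le A B \<and> \<not> le1 le B A"

definition less2 :: "('a \<Rightarrow> 'a \<Rightarrow> bool) \<Rightarrow> 'a set list \<Rightarrow> 'a set list \<Rightarrow> bool" where
  "less2 le r s \<longleftrightarrow> (\<exists>f. (\<forall>i<length r. f i < length s) \<and>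
      (\<forall>i<length r. le1 le (r ! i) (s ! f i)) \<and>
      (\<exists>i<length r. less1 le (r ! i) (s ! f i)) \<and>
      (\<forall>i<length r. \<forall>j<length r. i \<noteq> j \<and> f i = f j \<longrightarrow> less1 le (r ! i) (s ! f i)))"

end

theory Submission
  imports Defs "HOL-Library.Multiset"
begin

text \<open>Replace every finite set \<open>A\<close> by its upward closure in \<open>X\<close>. Then \<open>\<le>\<^sub>1\<close> becomes
  reverse inclusion of upward closed sets, and \<open><\<^sub>2\<close> becomes an instance of the multiset
  extension of strict reverse inclusion: the indices on which \<open>f\<close> is only weak are mapped
  injectively onto equal upsets, and the upset of every strict index is dominated by the
  image upset, which no weak index hits. In a wqo an ascending chain of upward closed sets stabilises, so
  strict reverse inclusion is well-founded, hence so is its multiset extension.\<close>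

definition upclosure :: "'a set \<Rightarrow> ('a \<Rightarrow> 'a \<Rightarrow> bool) \<Rightarrow> 'a set \<Rightarrow> 'a set" where
  "upclosure X le A = {x \<in> X. \<exists>y\<in>A. le y x}"

definition upward_closed :: "'a set \<Rightarrow> ('a \<Rightarrow> 'a \<Rightarrow> bool) \<Rightarrow> 'a set \<Rightarrow> bool" where
  "upward_closed X le V \<longleftrightarrow> (\<forall>x\<in>V. \<forall>y\<in>X. le x y \<longrightarrow> y \<in> V)"

definition upset_supset :: "'a set \<Rightarrow> ('a \<Rightarrow> 'a \<Rightarrow> bool) \<Rightarrow> ('a set \<times> 'a set) set" where
  "upset_supset X le = {(U, V). V \<subset> U \<and> U \<subseteq> X \<and> upward_closed X le V}"

lemma le1_iff_upclosure_subset: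
  assumes q: "qo_on X le" and "A \<subseteq> X" and "B \<subseteq> X"
  shows "le1 le A B \<longleftrightarrow> upclosure X le B \<subseteq> upclosure X le A"
proof
  assume "le1 le A B"
  show "upclosure X le B \<subseteq> upclosure X le A"
  proof
    fix x assume "x \<in> upclosure X le B"
    then obtain y where "x \<in> X" "y \<in> B" "le y x" unfolding upclosure_def by blast
    moreover obtain z where "z \<in> A" "le z y" using \<open>le1 le A B\<close> \<open>y \<in> B\<close> unfolding le1_def by blast
    ultimately show "x \<in> upclosure X le A"
      using q \<open>A \<subseteq> X\<close> \<open>B \<subseteq> X\<close> unfolding upclosure_def qo_on_def by blast
  qed
next
  assume "upclosure X le B \<subseteq> upclosure X le A"
  moreover have "B \<subseteq> upclosure X le B"
    using q \<open>B \<subseteq> X\<close> unfolding upclosure_def qo_on_def by blast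
  ultimately show "le1 le A B"
    unfolding le1_def upclosure_def by blast
qed

lemma less1_iff_upclosure_psubset:
  assumes "qo_on X le" and "A \<subseteq> X" and "B \<subseteq> X"
  shows "less1 le A B \<longleftrightarrow> upclosure X le B \<subset> upclosure X le A"
  using le1_iff_upclosure_subset[OF assms] le1_iff_upclosure_subset[of X le B A] assms
  unfolding less1_def by auto

lemma upward_closed_upclosure:
  assumes "qo_on X le" and "A \<subseteq> X"
  shows "upward_closed X le (upclosure X le A)"
  using assms unfolding upward_closed_def upclosure_def qo_on_def by blast

lemma wf_upset_supset:
  assumes w: "wqo_on X le"
  shows "wf (upset_supset X le)"
  unfolding wf_iff_no_infinite_down_chain
proof
  assume "\<exists>U. \<forall>i. (U (Suc i), U i) \<in> upset_supset X le"
  then obtain U where U: "\<And>i. (U (Suc i), U i) \<in> upset_supset X le" by blast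
  then have "mono U"
    unfolding mono_iff_le_Suc by (auto simp: upset_supset_def)
  have "\<forall>i. \<exists>x. x \<in> U (Suc i) - U i" using U unfolding upset_supset_def by blast
  then obtain x where x: "\<And>i. x i \<in> U (Suc i) - U i" by metis
  have "x i \<in> X" for i using x[of i] U[of i] unfolding upset_supset_def by auto
  then obtain i j where "i < j" and "le (x i) (x j)" using w unfolding wqo_on_def by blast
  moreover have "x i \<in> U j"
    using \<open>mono U\<close> \<open>i < j\<close> x[of i] by (auto dest: monoD[of U "Suc i" j])
  ultimately have "x j \<in> U j"
    using U[of j] \<open>x j \<in> X\<close> unfolding upset_supset_def upward_closed_def by blast
  then show False using x[of j] by auto
qed

lemma mset_split_indices:
  assumes "A \<subseteq> {..<length xs}"
  shows "mset xs = image_mset (nth xs) (mset_set A)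
    + image_mset (nth xs) (mset_set ({..<length xs} - A))"
proof -
  have "mset xs = image_mset (nth xs) (mset_set {..<length xs})"
    by (metis map_nth mset_map mset_set_upto_eq_mset_upto)
  also have "{..<length xs} = A \<union> ({..<length xs} - A)" using assms by blast
  also have "mset_set \<dots> = mset_set A + mset_set ({..<length xs} - A)"
    using assms by (intro mset_set_Union) (auto intro: finite_subset)
  finally show ?thesis by simp
qed

lemma mset_mult_by_index_map:
  assumes f: "\<forall>i<length xs. f i < length ys"
    and match: "\<forall>i<length xs. (xs ! i, ys ! f i) \<in> R \<or>
                  (xs ! i = ys ! f i \<and> (\<forall>j<length xs. f j = f i \<longrightarrow> j = i))"
    and strict: "\<exists>i<length xs. (xs ! i, ys ! f i) \<in> R"
  shows "(mset xs, mset ys) \<in> mult R"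
proof -
  define E where "E = {i. i < length xs \<and> (xs ! i, ys ! f i) \<notin> R}"
  define T where "T = {..<length ys} - f ` E"
  have "finite E" unfolding E_def by simp
  have "inj_on f E" using match unfolding E_def inj_on_def by blast
  have E_eq: "xs ! i = ys ! f i" if "i \<in> E" for i using match that unfolding E_def by blast
  have strict_in_T: "f i \<in> T" if "i < length xs" "i \<notin> E" for i
    using that f match unfolding T_def E_def by blast
  have "finite T" unfolding T_def by simp
  let ?I = "image_mset (nth ys) (mset_set (f ` E))"
  let ?K = "image_mset (nth xs) (mset_set ({..<length xs} - E))"
  let ?J = "image_mset (nth ys) (mset_set T)"
  have "image_mset (nth xs) (mset_set E) = image_mset (nth ys) (image_mset f (mset_set E))"
    using E_eq \<open>finite E\<close> by (auto simp: multiset.map_comp intro!: image_mset_cong)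
  then have xs_eq: "mset xs = ?I + ?K"
    using mset_split_indices[of E xs] \<open>inj_on f E\<close>
    by (simp add: image_mset_mset_set E_def subset_eq)
  have ys_eq: "mset ys = ?I + ?J"
    using mset_split_indices[of "f ` E" ys] f unfolding T_def E_def by auto
  have J_nonempty: "?J \<noteq> {#}"
  proof -
    obtain i where "i < length xs" "(xs ! i, ys ! f i) \<in> R" using strict by blast
    then have "f i \<in> T" using strict_in_T unfolding E_def by blast
    then show ?thesis using \<open>finite T\<close> by (auto simp: mset_set_empty_iff)
  qed
  have K_dominated: "\<forall>k\<in>#?K. \<exists>j\<in>#?J. (k, j) \<in> R"
  proof
    fix k assume "k \<in># ?K"
    then obtain i where "i < length xs" "i \<notin> E" "k = xs ! i" by auto
    then show "\<exists>j\<in>#?J. (k, j) \<in> R"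
      using strict_in_T \<open>finite T\<close> unfolding E_def by auto
  qed
  show ?thesis
    unfolding xs_eq ys_eq using J_nonempty K_dominated by (rule one_step_implies_mult)
qed

lemma less2_imp_mult_upset_supset:
  assumes q: "qo_on X le" and "r \<in> fin_seqs X" and "s \<in> fin_seqs X" and "less2 le r s"
  shows "(mset (map (upclosure X le) r), mset (map (upclosure X le) s))
           \<in> mult (upset_supset X le)"
proof -
  let ?u = "upclosure X le"
  obtain f where f: "\<forall>i<length r. f i < length s"
    and weak: "\<forall>i<length r. le1 le (r ! i) (s ! f i)"
    and strict: "\<exists>i<length r. less1 le (r ! i) (s ! f i)"
    and shared: "\<forall>i<length r. \<forall>j<length r. i \<noteq> j \<and> f i = f j \<longrightarrow> less1 le (r ! i) (s ! f i)"
    using \<open>less2 le r s\<close> unfolding less2_def by blast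
  have r_sub: "r ! i \<subseteq> X" if "i < length r" for i
    using \<open>r \<in> fin_seqs X\<close> that unfolding fin_seqs_def fin_subsets_def by (auto dest!: nth_mem)
  have s_sub: "s ! j \<subseteq> X" if "j < length s" for j
    using \<open>s \<in> fin_seqs X\<close> that unfolding fin_seqs_def fin_subsets_def by (auto dest!: nth_mem)
  have less1_iff: "less1 le (r ! i) (s ! f i) \<longleftrightarrow> (?u (r ! i), ?u (s ! f i)) \<in> upset_supset X le"
    if "i < length r" for i
    using less1_iff_upclosure_psubset[OF q r_sub s_sub] upward_closed_upclosure[OF q s_sub] f that
    unfolding upset_supset_def upclosure_def by auto
  have le1_imp_eq: "?u (r ! i) = ?u (s ! f i)"
    if "i < length r" "\<not> less1 le (r ! i) (s ! f i)" for i
    using that weak f less1_iff_upclosure_psubset[OF q r_sub s_sub]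
      le1_iff_upclosure_subset[OF q r_sub s_sub] by blast
  have match: "(?u (r ! i), ?u (s ! f i)) \<in> upset_supset X le \<or>
      (?u (r ! i) = ?u (s ! f i) \<and> (\<forall>j<length r. f j = f i \<longrightarrow> j = i))"
    if "i < length r" for i
  proof (cases "less1 le (r ! i) (s ! f i)")
    case True
    then show ?thesis using less1_iff[OF that] by blast
  next
    case False
    then have "j = i" if "j < length r" "f j = f i" for j
      using shared \<open>i < length r\<close> that by metis
    then show ?thesis using False le1_imp_eq[OF that] by blast
  qed
  moreover have "\<exists>i<length r. (?u (r ! i), ?u (s ! f i)) \<in> upset_supset X le"
    using strict less1_iff by blast
  ultimately show ?thesis
    using f by (intro mset_mult_by_index_map[where f = f]) (simp_all, metis nth_map)
qed

theorem lemma2: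
  fixes X :: "'a set" and le :: "'a \<Rightarrow> 'a \<Rightarrow> bool"
  assumes "wqo_on X le"
  shows "\<not> (\<exists>s :: nat \<Rightarrow> 'a set list. (\<forall>n. s n \<in> fin_seqs X) \<and>
                (\<forall>n. less2 le (s (Suc n)) (s n)))"
proof
  assume "\<exists>s :: nat \<Rightarrow> 'a set list. (\<forall>n. s n \<in> fin_seqs X) \<and> (\<forall>n. less2 le (s (Suc n)) (s n))"
  then obtain s :: "nat \<Rightarrow> 'a set list" where s_seqs: "\<And>n. s n \<in> fin_seqs X"
    and s_desc: "\<And>n. less2 le (s (Suc n)) (s n)" by blast
  have "qo_on X le" using assms unfolding wqo_on_def by auto
  define M where "M n = mset (map (upclosure X le) (s n))" for n
  have "(M (Suc n), M n) \<in> mult (upset_supset X le)" for n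
    unfolding M_def by (rule less2_imp_mult_upset_supset[OF \<open>qo_on X le\<close> s_seqs s_seqs s_desc])
  then show False
    using wf_mult[OF wf_upset_supset[OF assms]] unfolding wf_iff_no_infinite_down_chain by blast
qed

end
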